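(* For every positive integer $n$ there exists a nearly finitary matroid $M$ whose finitarization spectrum $\mathrm{Spec}(M)$ is a finite set with $|\mathrm{Spec}(M)|\ge n$. (That is, there exist nearly finitary matroids with finitarization spectrum of arbitrarily large finite size.)
   Context: A matroid $M=(E,\mathcal{L})$ consists of a (possibly infinite) set $E$ and a family $\mathcal{L}\subseteq 2^E$ of independent sets such that: (I1) $\emptyset\in\mathcal{L}$; (I2) subsets of independent sets are independent; (I3) if $B$ is a maximal element of $\mathcal{L}$ and $A\in\mathcal{L}$ is not maximal, there is $b\in B\setminus A$ with $A\cup\{b\}\in\mathcal{L}$; (I4) if $A\in\mathcal{L}$ and $A\subseteq X\subseteq E$, then $\{S\in\mathcal{L}: A\subseteq S\subseteq X\}$ has a maximal element. Bases are maximal independent sets. The finitarization $M^{\mathrm{fin}}=(E,\mathcal{L}^{\mathrm{fin}})$ has as independent sets all $S\subseteq E$ whose finite subsets all lie in $\mathcal{L}$; it is a matroid. $M$ is nearly finitary if whenever a base $F$ of $M^{\mathrm{fin}}$ contains a base $B$ of $M$, the set $F\setminus B$ is finite. The finitarization spectrum is $\mathrm{Spec}(M)=\{|F\setminus B| : B\subseteq F,\ F \text{ a base of } M^{\mathrm{fin}},\ B \text{ a base of } M\}$, where all infinite cardinalities are identified with a single value $\infty$. *)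

theory Defs
  imports Main "HOL-Library.Extended_Nat"
begin

definition maximal_in :: "'a set set \<Rightarrow> 'a set \<Rightarrow> bool" where
  "maximal_in F S \<longleftrightarrow> S \<in> F \<and> (\<forall>T\<in>F. S \<subseteq> T \<longrightarrow> T = S)"

definition matroid :: "'a set \<Rightarrow> 'a set set \<Rightarrow> bool" where
  "matroid E L \<longleftrightarrow>
     (\<forall>S\<in>L. S \<subseteq> E) \<and>
     {} \<in> L \<and>
     (\<forall>A B. A \<in> L \<longrightarrow> B \<subseteq> A \<longrightarrow> B \<in> L) \<and>
     (\<forall>A B. maximal_in L B \<longrightarrow> A \<in> L \<longrightarrow> \<not> maximal_in L A \<longrightarrow>
        (\<exists>b\<in>B - A. insert b A \<in> L)) \<and>
     (\<forall>A X. A \<in> L \<longrightarrow> A \<subseteq> X \<longrightarrow> X \<subseteq> E \<longrightarrow>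
        (\<exists>S. maximal_in {S \<in> L. A \<subseteq> S \<and> S \<subseteq> X} S))"

definition base :: "'a set set \<Rightarrow> 'a set \<Rightarrow> bool" where
  "base L B \<longleftrightarrow> maximal_in L B"

definition fin_indep :: "'a set \<Rightarrow> 'a set set \<Rightarrow> 'a set set" where
  "fin_indep E L = {S. S \<subseteq> E \<and> (\<forall>T. T \<subseteq> S \<longrightarrow> finite T \<longrightarrow> T \<in> L)}"

definition nearly_finitary :: "'a set \<Rightarrow> 'a set set \<Rightarrow> bool" where
  "nearly_finitary E L \<longleftrightarrow>
     (\<forall>F B. base (fin_indep E L) F \<longrightarrow> base L B \<longrightarrow> B \<subseteq> F \<longrightarrow> finite (F - B))"

definition ecard :: "'a set \<Rightarrow> enat" where
  "ecard X = (if finite X then enat (card X) else \<infinity>)"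

definition fin_spectrum :: "'a set \<Rightarrow> 'a set set \<Rightarrow> enat set" where
  "fin_spectrum E L = {ecard (F - B) | F B.
      base (fin_indep E L) F \<and> base L B \<and> B \<subseteq> F}"

end

(* The matroid is the direct sum of m copies of a topological "fan": a ray v_0 v_1 v_2 ... with
   rim edges v_k v_(k+1), a hub joined to every v_k by a spoke, and the end of the ray identified
   with the hub. Its circuits are the finite cycles (two spokes and the rims between them) and the
   infinite circles (one spoke and the whole tail of the ray behind it); the finitarization keeps
   only the finite cycles.
   If a base F of the finitarization contains a base B, every element e of F - B closes an
   infinite circle inside insert e B, and a set without finite cycles contains at most one
   infinite circle per fan. Hence F - B meets each fan in at most one element. Conversely, taking
   the whole ray in j fans and all spokes in the others gives a base B, and adding spoke 0 in
   each of the j fans gives a base F of the finitarization with |F - B| = j. So the spectrum is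
   {0, ..., m}.
   For the axiom (I4), a maximal set without finite cycles between A and X exists by Zorn's
   lemma; removing from each of its infinite circles one point outside A gives the maximal
   independent set. *)
theory Submission
  imports Defs "HOL-Library.Nat_Bijection"
begin

lemma maximal_in_insert_notin: "maximal_in L B \<Longrightarrow> x \<notin> B \<Longrightarrow> insert x B \<notin> L"
  unfolding maximal_in_def by blast

lemma maximal_inI_insert:
  assumes "S \<in> L" and "\<And>T. T \<in> L \<Longrightarrow> T \<subseteq> E" and "\<And>T U. T \<in> L \<Longrightarrow> U \<subseteq> T \<Longrightarrow> U \<in> K"
    and "\<And>x. x \<in> E - S \<Longrightarrow> insert x S \<notin> K"
  shows "maximal_in L S"
  unfolding maximal_in_def
proof (intro conjI ballI impI)
  fix T assume T: "T \<in> L" "S \<subseteq> T"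
  show "T = S"
  proof (rule ccontr)
    assume "T \<noteq> S"
    then obtain x where x: "x \<in> T" "x \<notin> S" using T(2) by blast
    then have "insert x S \<in> K" using assms(3) T by blast
    moreover have "x \<in> E - S" using x assms(2) T(1) by blast
    ultimately show False using assms(4) by blast
  qed
qed (fact assms(1))

(* Edges of the fans, coded as singletons because the ground set has to consist of sets of naturals. *)
definition rim :: "nat \<Rightarrow> nat \<Rightarrow> nat set" where
  "rim b k = {prod_encode (b, 2 * k)}"

definition spoke :: "nat \<Rightarrow> nat \<Rightarrow> nat set" where
  "spoke b k = {prod_encode (b, Suc (2 * k))}"

lemma rim_eq_iff [simp]: "rim b k = rim b' k' \<longleftrightarrow> b = b' \<and> k = k'"
  by (auto simp: rim_def)

lemma spoke_eq_iff [simp]: "spoke b k = spoke b' k' \<longleftrightarrow> b = b' \<and> k = k'"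
  by (auto simp: spoke_def)

lemma rim_neq_spoke [simp]: "rim b k \<noteq> spoke b' k'" "spoke b' k' \<noteq> rim b k"
  by (auto simp: rim_def spoke_def) presburger+

lemma rim_in_image_rim_iff [simp]: "rim b k \<in> rim b' ` K \<longleftrightarrow> b = b' \<and> k \<in> K"
  by auto

lemma spoke_in_image_spoke_iff [simp]: "spoke b k \<in> spoke b' ` K \<longleftrightarrow> b = b' \<and> k \<in> K"
  by auto

lemma rim_notin_image_spoke [simp]: "rim b k \<notin> spoke b' ` K"
  by auto

lemma spoke_notin_image_rim [simp]: "spoke b k \<notin> rim b' ` K"
  by auto

definition block :: "nat \<Rightarrow> nat set set" where
  "block b = range (rim b) \<union> range (spoke b)"

lemma rim_in_block_iff [simp]: "rim b k \<in> block b' \<longleftrightarrow> b = b'"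
  by (auto simp: block_def)

lemma spoke_in_block_iff [simp]: "spoke b k \<in> block b' \<longleftrightarrow> b = b'"
  by (auto simp: block_def)

lemma block_disjoint: "e \<in> block b \<Longrightarrow> e \<in> block b' \<Longrightarrow> b = b'"
  by (auto simp: block_def)

definition fan_edges :: "nat \<Rightarrow> nat set set" where
  "fan_edges m = (\<Union>b<m. block b)"

lemma rim_in_fan_edges_iff [simp]: "rim b k \<in> fan_edges m \<longleftrightarrow> b < m"
  by (auto simp: fan_edges_def)

lemma spoke_in_fan_edges_iff [simp]: "spoke b k \<in> fan_edges m \<longleftrightarrow> b < m"
  by (auto simp: fan_edges_def)

lemma fan_edges_cases:
  assumes "e \<in> fan_edges m"
  obtains b k where "b < m" "e = rim b k" | b k where "b < m" "e = spoke b k"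
  using assms by (auto simp: fan_edges_def block_def)

definition finite_circle :: "nat \<Rightarrow> nat \<Rightarrow> nat \<Rightarrow> nat set set" where
  "finite_circle b i j = {spoke b i, spoke b j} \<union> rim b ` {i..<j}"

definition infinite_circle :: "nat \<Rightarrow> nat \<Rightarrow> nat set set" where
  "infinite_circle b i = insert (spoke b i) (rim b ` {i..})"

lemma finite_circle_subset_block: "finite_circle b i j \<subseteq> block b"
  by (auto simp: finite_circle_def)

lemma infinite_circle_subset_block: "infinite_circle b i \<subseteq> block b"
  by (auto simp: infinite_circle_def)

lemma finite_finite_circle: "finite (finite_circle b i j)"
  by (simp add: finite_circle_def)

lemma infinite_infinite_circle: "infinite (infinite_circle b i)"
proof
  assume "finite (infinite_circle b i)"
  then have "finite (rim b ` {i..})" by (simp add: infinite_circle_def)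
  then have "finite {i..}" by (rule finite_imageD) (simp add: inj_on_def)
  then show False by (simp add: infinite_Ici)
qed

lemma finite_circle_subset_infinite_circles:
  "finite_circle b i j \<subseteq> infinite_circle b i \<union> infinite_circle b j"
  by (auto simp: finite_circle_def infinite_circle_def)

lemma infinite_circle_elimination:
  assumes x: "x \<in> finite_circle b i j" "x \<in> infinite_circle b t" and ij: "i < j"
  shows "\<exists>u. infinite_circle b u \<subseteq> (finite_circle b i j \<union> infinite_circle b t) - {x}"
proof -
  from x(1) consider "x = spoke b i" | "x = spoke b j" | k where "x = rim b k" "k < j"
    unfolding finite_circle_def by auto
  then show ?thesis
  proof cases
    case 1
    then have "t = i" using x(2) by (auto simp: infinite_circle_def)
    then show ?thesis using 1 ij
      by (intro exI[of _ j]) (auto simp: finite_circle_def infinite_circle_def)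
  next
    case 2
    then have "t = j" using x(2) by (auto simp: infinite_circle_def)
    then show ?thesis using 2 ij
      by (intro exI[of _ i]) (auto simp: finite_circle_def infinite_circle_def)
  next
    case (3 k)
    then have "t \<le> k" using x(2) by (auto simp: infinite_circle_def)
    then show ?thesis using 3
      by (intro exI[of _ j]) (auto simp: finite_circle_def infinite_circle_def)
  qed
qed

definition finite_circle_free :: "nat set set \<Rightarrow> bool" where
  "finite_circle_free S \<longleftrightarrow> (\<forall>b i j. i < j \<longrightarrow> \<not> finite_circle b i j \<subseteq> S)"

definition infinite_circle_free :: "nat set set \<Rightarrow> bool" where
  "infinite_circle_free S \<longleftrightarrow> (\<forall>b i. \<not> infinite_circle b i \<subseteq> S)"

definition fan_indep :: "nat \<Rightarrow> nat set set set" where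
  "fan_indep m = {S. S \<subseteq> fan_edges m \<and> finite_circle_free S \<and> infinite_circle_free S}"

lemma finite_circle_free_subset: "finite_circle_free T \<Longrightarrow> S \<subseteq> T \<Longrightarrow> finite_circle_free S"
  unfolding finite_circle_free_def by blast

lemma infinite_circle_free_subset: "infinite_circle_free T \<Longrightarrow> S \<subseteq> T \<Longrightarrow> infinite_circle_free S"
  unfolding infinite_circle_free_def by blast

lemma fan_indep_subset: "T \<in> fan_indep m \<Longrightarrow> S \<subseteq> T \<Longrightarrow> S \<in> fan_indep m"
  unfolding fan_indep_def using finite_circle_free_subset infinite_circle_free_subset by blast

lemma infinite_circle_unique:
  assumes "finite_circle_free S" "infinite_circle b i \<subseteq> S" "infinite_circle b j \<subseteq> S"
  shows "i = j"
proof (rule ccontr)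
  assume "i \<noteq> j"
  then have "i < j \<and> finite_circle b i j \<subseteq> S \<or> j < i \<and> finite_circle b j i \<subseteq> S"
    using assms(2,3) finite_circle_subset_infinite_circles by fastforce
  then show False using assms(1) unfolding finite_circle_free_def by blast
qed

lemma finite_circle_free_iff:
  "finite_circle_free S \<longleftrightarrow>
     (\<forall>b i j. spoke b i \<in> S \<longrightarrow> spoke b j \<in> S \<longrightarrow> i < j \<longrightarrow> (\<exists>k. i \<le> k \<and> k < j \<and> rim b k \<notin> S))"
  unfolding finite_circle_free_def finite_circle_def by (auto simp: image_subset_iff Bex_def)

lemma infinite_circle_free_iff:
  "infinite_circle_free S \<longleftrightarrow> (\<forall>b i. spoke b i \<in> S \<longrightarrow> (\<exists>k\<ge>i. rim b k \<notin> S))"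
  unfolding infinite_circle_free_def infinite_circle_def by (auto simp: image_subset_iff)

lemma fan_indep_iff_gaps:
  "S \<in> fan_indep m \<longleftrightarrow> S \<subseteq> fan_edges m \<and>
     (\<forall>b i j. spoke b i \<in> S \<longrightarrow> spoke b j \<in> S \<longrightarrow> i < j \<longrightarrow> (\<exists>k. i \<le> k \<and> k < j \<and> rim b k \<notin> S)) \<and>
     (\<forall>b i. spoke b i \<in> S \<longrightarrow> (\<exists>k\<ge>i. rim b k \<notin> S))"
  by (simp add: fan_indep_def finite_circle_free_iff infinite_circle_free_iff)

lemma fan_indep_gap_between:
  "S \<in> fan_indep m \<Longrightarrow> spoke b i \<in> S \<Longrightarrow> spoke b j \<in> S \<Longrightarrow> i < j \<Longrightarrow> \<exists>k. i \<le> k \<and> k < j \<and> rim b k \<notin> S"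
  unfolding fan_indep_iff_gaps by blast

lemma fan_indep_gap_after: "S \<in> fan_indep m \<Longrightarrow> spoke b i \<in> S \<Longrightarrow> \<exists>k\<ge>i. rim b k \<notin> S"
  unfolding fan_indep_iff_gaps by blast

(* The rim v_k v_(k+1) is missing from A, and the component of v_k in A is a path of rims that
   does not reach the hub. *)
definition spokeless_gap :: "nat set set \<Rightarrow> nat \<Rightarrow> nat \<Rightarrow> bool" where
  "spokeless_gap A b k \<longleftrightarrow>
     rim b k \<notin> A \<and> (\<forall>j\<le>k. spoke b j \<in> A \<longrightarrow> (\<exists>q. j \<le> q \<and> q < k \<and> rim b q \<notin> A))"

lemma fan_indep_insert_spoke:
  assumes A: "A \<in> fan_indep m" and b: "b < m" and gap: "spokeless_gap A b k"
    and jk: "j \<le> k" and run: "\<forall>q. j \<le> q \<and> q < k \<longrightarrow> rim b q \<in> A"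
  shows "spoke b j \<notin> A" "insert (spoke b j) A \<in> fan_indep m"
proof -
  have not_in: "spoke b j' \<notin> A" if "j \<le> j'" "j' \<le> k" for j'
    using gap run that unfolding spokeless_gap_def by (meson le_trans)
  then show "spoke b j \<notin> A" using jk by blast
  have before: "\<exists>q. i \<le> q \<and> q < j \<and> rim b q \<notin> A" if "spoke b i \<in> A" "i < j" for i
    using gap run that jk unfolding spokeless_gap_def by (meson le_trans less_imp_le not_le)
  have after: "k < i" if "spoke b i \<in> A" "j < i" for i
    using not_in that by (meson less_imp_le not_le)
  show "insert (spoke b j) A \<in> fan_indep m"
    unfolding fan_indep_iff_gaps
  proof (intro conjI allI impI)
    show "insert (spoke b j) A \<subseteq> fan_edges m" using A b by (simp add: fan_indep_def)
  next
    fix b' i i'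
    assume "spoke b' i \<in> insert (spoke b j) A" "spoke b' i' \<in> insert (spoke b j) A" "i < i'"
    then consider "spoke b' i \<in> A" "spoke b' i' \<in> A" | "b' = b" "i = j" "spoke b i' \<in> A"
      | "b' = b" "i' = j" "spoke b i \<in> A"
      by auto
    then show "\<exists>q. i \<le> q \<and> q < i' \<and> rim b' q \<notin> insert (spoke b j) A"
    proof cases
      case 1
      then show ?thesis using fan_indep_gap_between[OF A 1 \<open>i < i'\<close>] by auto
    next
      case 2
      then show ?thesis using after \<open>i < i'\<close> jk gap unfolding spokeless_gap_def by auto
    next
      case 3
      then show ?thesis using before \<open>i < i'\<close> by auto
    qed
  next
    fix b' i assume "spoke b' i \<in> insert (spoke b j) A"
    then show "\<exists>q\<ge>i. rim b' q \<notin> insert (spoke b j) A"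
      using fan_indep_gap_after[OF A] gap jk unfolding spokeless_gap_def by auto
  qed
qed

lemma fan_indep_insert_rim_at_gap:
  assumes A: "A \<in> fan_indep m" and b: "b < m" and gap: "spokeless_gap A b k"
  shows "insert (rim b k) A \<in> fan_indep m"
  unfolding fan_indep_iff_gaps
proof (intro conjI allI impI)
  show "insert (rim b k) A \<subseteq> fan_edges m" using A b by (simp add: fan_indep_def)
next
  fix b' i j assume "spoke b' i \<in> insert (rim b k) A" "spoke b' j \<in> insert (rim b k) A" "i < j"
  then have s: "spoke b' i \<in> A" "spoke b' j \<in> A" "i < j" by auto
  then obtain q where q: "i \<le> q" "q < j" "rim b' q \<notin> A" using fan_indep_gap_between[OF A] by blast
  show "\<exists>q. i \<le> q \<and> q < j \<and> rim b' q \<notin> insert (rim b k) A"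
  proof (cases "b' = b \<and> q = k")
    case True
    then obtain q' where "i \<le> q'" "q' < k" "rim b q' \<notin> A"
      using gap s q unfolding spokeless_gap_def by auto
    then show ?thesis using True q by (intro exI[of _ q']) auto
  qed (use q in auto)
next
  fix b' i assume s: "spoke b' i \<in> insert (rim b k) A"
  then obtain q where q: "i \<le> q" "rim b' q \<notin> A" using fan_indep_gap_after[OF A] by auto
  show "\<exists>q\<ge>i. rim b' q \<notin> insert (rim b k) A"
  proof (cases "b' = b \<and> q = k")
    case True
    then obtain q' where "i \<le> q'" "q' < k" "rim b q' \<notin> A"
      using gap s q unfolding spokeless_gap_def by auto
    then show ?thesis using True by (intro exI[of _ q']) auto
  qed (use q in auto)
qed

lemma fan_indep_insert_rim_before_gap:
  assumes A: "A \<in> fan_indep m" and b: "b < m" and gap: "spokeless_gap A b k"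
    and pk: "p < k" and run: "\<forall>q. p < q \<and> q < k \<longrightarrow> rim b q \<in> A"
  shows "insert (rim b p) A \<in> fan_indep m"
proof -
  have beyond: "k < j" if "spoke b j \<in> A" "p < j" for j
    using gap run that unfolding spokeless_gap_def by (meson le_less_trans not_le)
  have gap_k: "rim b k \<notin> insert (rim b p) A" using gap pk unfolding spokeless_gap_def by simp
  show ?thesis
    unfolding fan_indep_iff_gaps
  proof (intro conjI allI impI)
    show "insert (rim b p) A \<subseteq> fan_edges m" using A b by (simp add: fan_indep_def)
  next
    fix b' i j assume "spoke b' i \<in> insert (rim b p) A" "spoke b' j \<in> insert (rim b p) A" "i < j"
    then have s: "spoke b' i \<in> A" "spoke b' j \<in> A" "i < j" by auto
    then obtain q where q: "i \<le> q" "q < j" "rim b' q \<notin> A" using fan_indep_gap_between[OF A] by blast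
    show "\<exists>q. i \<le> q \<and> q < j \<and> rim b' q \<notin> insert (rim b p) A"
    proof (cases "b' = b \<and> q = p")
      case True
      then show ?thesis using beyond[of j] s q pk gap_k by (intro exI[of _ k]) auto
    qed (use q in auto)
  next
    fix b' i assume s: "spoke b' i \<in> insert (rim b p) A"
    then obtain q where q: "i \<le> q" "rim b' q \<notin> A" using fan_indep_gap_after[OF A] by auto
    show "\<exists>q\<ge>i. rim b' q \<notin> insert (rim b p) A"
    proof (cases "b' = b \<and> q = p")
      case True
      then show ?thesis using q pk gap_k by (intro exI[of _ k]) auto
    qed (use q in auto)
  qed
qed

lemma fan_indep_spoke_segment:
  assumes S: "S \<in> fan_indep m" and s: "spoke b j \<in> S"
  obtains k where "j \<le> k" "\<forall>q. j \<le> q \<and> q < k \<longrightarrow> rim b q \<in> S"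
    "spokeless_gap (S - {spoke b j}) b k"
proof -
  define k where "k = (LEAST k. j \<le> k \<and> rim b k \<notin> S)"
  obtain k0 where "j \<le> k0" "rim b k0 \<notin> S" using fan_indep_gap_after[OF S s] by blast
  then have k: "j \<le> k" "rim b k \<notin> S" unfolding k_def by (metis (mono_tags, lifting) LeastI)+
  have run: "\<forall>q. j \<le> q \<and> q < k \<longrightarrow> rim b q \<in> S"
    unfolding k_def using not_less_Least by blast
  have "\<exists>q. j' \<le> q \<and> q < k \<and> rim b q \<notin> S - {spoke b j}"
    if "j' \<le> k" "spoke b j' \<in> S - {spoke b j}" for j'
  proof (cases "j' < j")
    case True
    then show ?thesis using fan_indep_gap_between[OF S _ s] that k(1) by fastforce
  next
    case False
    then have "j < j'" using that(2) by (auto simp: nat_neq_iff)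
    then show ?thesis using fan_indep_gap_between[OF S s] that run by (meson DiffD1 less_le_trans)
  qed
  with k run show ?thesis using that unfolding spokeless_gap_def by blast
qed

lemma fan_indep_insert_imp_spokeless_gap:
  assumes A: "A \<in> fan_indep m" and x: "x \<notin> A" and ins: "insert x A \<in> fan_indep m"
  shows "\<exists>b<m. \<exists>k. spokeless_gap A b k"
proof -
  have "x \<in> fan_edges m" using ins by (simp add: fan_indep_def)
  then show ?thesis
  proof (cases rule: fan_edges_cases)
    case (2 b i)
    obtain k where "spokeless_gap (insert x A - {spoke b i}) b k"
      using fan_indep_spoke_segment[OF ins] 2 by blast
    then show ?thesis using 2 x by auto
  next
    case (1 b k)
    show ?thesis
    proof (cases "spokeless_gap A b k")
      case False
      then obtain j where j: "j \<le> k" "spoke b j \<in> A" "\<forall>q. j \<le> q \<and> q < k \<longrightarrow> rim b q \<in> A"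
        using x 1 unfolding spokeless_gap_def by blast
      obtain k' where k': "j \<le> k'" "\<forall>q. j \<le> q \<and> q < k' \<longrightarrow> rim b q \<in> insert x A"
        and gap': "spokeless_gap (insert x A - {spoke b j}) b k'"
        using fan_indep_spoke_segment[OF ins] j(2) by blast
      have "rim b k' \<notin> insert x A" using gap' 1 unfolding spokeless_gap_def by auto
      then have "k < k'" using j k'(1) 1 by (cases k k' rule: linorder_cases) auto
      have "spokeless_gap A b k'"
        unfolding spokeless_gap_def
      proof (intro conjI allI impI)
        show "rim b k' \<notin> A" using \<open>rim b k' \<notin> insert x A\<close> by blast
        fix j' assume j': "j' \<le> k'" "spoke b j' \<in> A"
        show "\<exists>q. j' \<le> q \<and> q < k' \<and> rim b q \<notin> A"
        proof (cases "j' = j")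
          case True
          then show ?thesis using j(1) \<open>k < k'\<close> x 1 by (intro exI[of _ k]) auto
        next
          case False
          then show ?thesis using gap' j' unfolding spokeless_gap_def by auto
        qed
      qed
      then show ?thesis using 1 by blast
    qed (use 1 in blast)
  qed
qed

lemma greatest_below_exists:
  fixes q k :: nat
  assumes "P q" "q < k"
  shows "\<exists>p. q \<le> p \<and> p < k \<and> P p \<and> (\<forall>r. p < r \<and> r < k \<longrightarrow> \<not> P r)"
proof (intro exI conjI allI impI)
  let ?p = "GREATEST p. p < k \<and> P p"
  show "?p < k" "P ?p" using GreatestI_nat[of "\<lambda>p. p < k \<and> P p" q k] assms by auto
  show "q \<le> ?p" using Greatest_le_nat[of "\<lambda>p. p < k \<and> P p" q k] assms by auto
  show "\<not> P r" if "?p < r \<and> r < k" for r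
    using Greatest_le_nat[of "\<lambda>p. p < k \<and> P p" r k] that by auto
qed

(* Either B contains the rim at the gap, or B, being maximal, has a spoke s_j attached to its run
   of rims ending at k; then s_j, or the last rim before k that is missing from A, can be added. *)
lemma fan_indep_augment_from_base:
  assumes B: "maximal_in (fan_indep m) B" and A: "A \<in> fan_indep m"
    and b: "b < m" and gap: "spokeless_gap A b k"
  shows "\<exists>x\<in>B - A. insert x A \<in> fan_indep m"
proof (cases "rim b k \<in> B")
  case True
  then show ?thesis using fan_indep_insert_rim_at_gap[OF A b gap] gap unfolding spokeless_gap_def by blast
next
  case False
  have BL: "B \<in> fan_indep m" using B by (simp add: maximal_in_def)
  have "\<not> spokeless_gap B b k"
  proof
    assume "spokeless_gap B b k"
    moreover have "\<forall>q. k \<le> q \<and> q < k \<longrightarrow> rim b q \<in> B" by auto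
    ultimately show False
      using fan_indep_insert_spoke[OF BL b _ order_refl] maximal_in_insert_notin[OF B] by blast
  qed
  then obtain j where j: "j \<le> k" "spoke b j \<in> B" "\<forall>q. j \<le> q \<and> q < k \<longrightarrow> rim b q \<in> B"
    using False unfolding spokeless_gap_def by blast
  show ?thesis
  proof (cases "\<forall>q. j \<le> q \<and> q < k \<longrightarrow> rim b q \<in> A")
    case True
    then show ?thesis using fan_indep_insert_spoke[OF A b gap j(1) True] j(2) by blast
  next
    case False
    then obtain q where q: "j \<le> q" "q < k" "rim b q \<notin> A" by blast
    obtain p where p: "q \<le> p" "p < k" "rim b p \<notin> A"
      and run: "\<forall>r. p < r \<and> r < k \<longrightarrow> rim b r \<in> A"
      using greatest_below_exists[of "\<lambda>p. rim b p \<notin> A", OF q(3) q(2)] by blast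
    have "rim b p \<in> B" using j(3) p q by auto
    then show ?thesis using fan_indep_insert_rim_before_gap[OF A b gap p(2) run] p(3) by blast
  qed
qed

lemma fan_indep_augment:
  assumes B: "maximal_in (fan_indep m) B" and A: "A \<in> fan_indep m"
    and not_max: "\<not> maximal_in (fan_indep m) A"
  shows "\<exists>x\<in>B - A. insert x A \<in> fan_indep m"
proof -
  obtain T where T: "T \<in> fan_indep m" "A \<subseteq> T" "T \<noteq> A"
    using not_max A unfolding maximal_in_def by blast
  then obtain x where "x \<in> T" "x \<notin> A" by blast
  then have "insert x A \<in> fan_indep m" using fan_indep_subset T by blast
  then obtain b k where "b < m" "spokeless_gap A b k"
    using fan_indep_insert_imp_spokeless_gap[OF A \<open>x \<notin> A\<close>] by blast
  then show ?thesis using fan_indep_augment_from_base[OF B A] by blast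
qed

lemma finite_circle_free_maximal_exists:
  assumes "finite_circle_free A" "A \<subseteq> X"
  obtains M where "finite_circle_free M" "A \<subseteq> M" "M \<subseteq> X"
    "\<And>x. x \<in> X - M \<Longrightarrow> \<not> finite_circle_free (insert x M)"
proof -
  let ?\<F> = "{S. finite_circle_free S \<and> A \<subseteq> S \<and> S \<subseteq> X}"
  have "\<exists>M\<in>?\<F>. \<forall>S\<in>?\<F>. M \<subseteq> S \<longrightarrow> S = M"
  proof (rule subset_Zorn_nonempty)
    show "?\<F> \<noteq> {}" using assms by blast
  next
    fix \<C> assume \<C>: "\<C> \<noteq> {}" "subset.chain ?\<F> \<C>"
    then have members: "\<And>S. S \<in> \<C> \<Longrightarrow> S \<in> ?\<F>" by (auto simp: subset.chain_def)
    have "\<not> finite_circle b i j \<subseteq> \<Union>\<C>" if "i < j" for b i j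
    proof
      assume "finite_circle b i j \<subseteq> \<Union>\<C>"
      then obtain S where "S \<in> \<C>" "finite_circle b i j \<subseteq> S"
        using finite_subset_Union_chain[OF finite_finite_circle _ \<C>] by blast
      then show False using members that unfolding finite_circle_free_def by blast
    qed
    then show "\<Union>\<C> \<in> ?\<F>" using \<C>(1) members unfolding finite_circle_free_def by blast
  qed
  then obtain M where M: "finite_circle_free M" "A \<subseteq> M" "M \<subseteq> X"
    and M_max: "\<And>S. S \<in> ?\<F> \<Longrightarrow> M \<subseteq> S \<Longrightarrow> S = M"
    by auto
  have "\<not> finite_circle_free (insert x M)" if x: "x \<in> X - M" for x
  proof
    assume "finite_circle_free (insert x M)"
    then have "insert x M = M" using M x by (intro M_max) auto
    then show False using x by blast
  qed
  then show ?thesis by (rule that[OF M])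
qed

definition break_circles :: "(nat \<Rightarrow> nat set) \<Rightarrow> nat set set \<Rightarrow> nat set set" where
  "break_circles d M = M - {d b | b. \<exists>t. infinite_circle b t \<subseteq> M}"

context
  fixes d :: "nat \<Rightarrow> nat set" and M :: "nat set set"
  assumes d_on_circle: "\<And>b t. infinite_circle b t \<subseteq> M \<Longrightarrow> d b \<in> infinite_circle b t"
begin

lemma break_circles_removed_in_block:
  assumes "y \<in> M - break_circles d M" "y \<in> block b"
  shows "y = d b" "\<exists>t. infinite_circle b t \<subseteq> M"
proof -
  obtain b' t where b': "infinite_circle b' t \<subseteq> M" "y = d b'"
    using assms(1) unfolding break_circles_def by blast
  then have "y \<in> block b'" using d_on_circle infinite_circle_subset_block by blast
  then have "b' = b" using assms(2) block_disjoint by blast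
  then show "y = d b" "\<exists>t. infinite_circle b t \<subseteq> M" using b' by blast+
qed

lemma break_circles_subset_insert:
  assumes C: "C \<subseteq> insert x M" "C \<subseteq> block b" "d b \<notin> C"
  shows "C \<subseteq> insert x (break_circles d M)"
proof
  fix c assume c: "c \<in> C"
  then have "c \<notin> M - break_circles d M"
    using break_circles_removed_in_block(1)[of c b] C(2,3) by blast
  then show "c \<in> insert x (break_circles d M)" using C(1) c by blast
qed

lemma infinite_circle_free_break_circles: "infinite_circle_free (break_circles d M)"
  unfolding infinite_circle_free_def
proof (intro allI notI)
  fix b t assume t: "infinite_circle b t \<subseteq> break_circles d M"
  then have "infinite_circle b t \<subseteq> M" unfolding break_circles_def by blast
  then have "d b \<in> break_circles d M" "d b \<notin> break_circles d M"
    using t d_on_circle unfolding break_circles_def by blast+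
  then show False by blast
qed

lemma break_circles_insert_removed:
  assumes "x \<in> M - break_circles d M"
  shows "\<not> infinite_circle_free (insert x (break_circles d M))"
proof -
  obtain b t where b: "infinite_circle b t \<subseteq> M" "x = d b"
    using assms unfolding break_circles_def by blast
  then have "infinite_circle b t - {x} \<subseteq> insert x (break_circles d M)"
    using break_circles_subset_insert[of "infinite_circle b t - {x}" x b]
      infinite_circle_subset_block by blast
  then show ?thesis unfolding infinite_circle_free_def by blast
qed

lemma break_circles_insert_finite_circle:
  assumes W: "finite_circle b i j \<subseteq> insert x M" and ij: "i < j"
  shows "\<not> finite_circle_free (insert x (break_circles d M)) \<or>
    \<not> infinite_circle_free (insert x (break_circles d M))"
proof (cases "finite_circle b i j \<inter> (M - break_circles d M) = {}")
  case True
  then have "finite_circle b i j \<subseteq> insert x (break_circles d M)" using W by blast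
  then show ?thesis using ij unfolding finite_circle_free_def by blast
next
  case False
  then obtain y where y: "y \<in> finite_circle b i j" "y \<in> M - break_circles d M" by blast
  have "y \<in> block b" using y(1) finite_circle_subset_block by blast
  then have "y = d b" and "\<exists>t. infinite_circle b t \<subseteq> M"
    using break_circles_removed_in_block[OF y(2)] by blast+
  then obtain t where t: "infinite_circle b t \<subseteq> M" by blast
  then have "y \<in> infinite_circle b t" using d_on_circle \<open>y = d b\<close> by simp
  then obtain u where
    u: "infinite_circle b u \<subseteq> (finite_circle b i j \<union> infinite_circle b t) - {d b}"
    using infinite_circle_elimination[OF y(1) _ ij] unfolding \<open>y = d b\<close> by blast
  then have "infinite_circle b u \<subseteq> insert x M" "d b \<notin> infinite_circle b u" using W t by blast+
  then have "infinite_circle b u \<subseteq> insert x (break_circles d M)"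
    by (rule break_circles_subset_insert[OF _ infinite_circle_subset_block])
  then show ?thesis unfolding infinite_circle_free_def by blast
qed

end

lemma fan_indep_maximal_exists:
  assumes A: "A \<in> fan_indep m" and AX: "A \<subseteq> X" and X: "X \<subseteq> fan_edges m"
  shows "\<exists>S. maximal_in {S \<in> fan_indep m. A \<subseteq> S \<and> S \<subseteq> X} S"
proof -
  from A have "finite_circle_free A" "infinite_circle_free A" by (simp_all add: fan_indep_def)
  obtain M where M: "finite_circle_free M" "A \<subseteq> M" "M \<subseteq> X"
    and M_max: "\<And>x. x \<in> X - M \<Longrightarrow> \<not> finite_circle_free (insert x M)"
    using finite_circle_free_maximal_exists[OF \<open>finite_circle_free A\<close> AX] by blast
  (* M has at most one infinite circle per fan, so d b lies on all of them *)
  define d where "d b = (SOME y. \<exists>t. infinite_circle b t \<subseteq> M \<and> y \<in> infinite_circle b t - A)" for b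
  have d: "d b \<in> infinite_circle b t - A" if t: "infinite_circle b t \<subseteq> M" for b t
  proof -
    have "\<exists>y. \<exists>t. infinite_circle b t \<subseteq> M \<and> y \<in> infinite_circle b t - A"
      using t \<open>infinite_circle_free A\<close> unfolding infinite_circle_free_def by blast
    then have "\<exists>t'. infinite_circle b t' \<subseteq> M \<and> d b \<in> infinite_circle b t' - A"
      unfolding d_def by (rule someI_ex)
    then obtain t' where t': "infinite_circle b t' \<subseteq> M" "d b \<in> infinite_circle b t' - A"
      by blast
    moreover have "t' = t" using infinite_circle_unique[OF M(1) t'(1) t] .
    ultimately show ?thesis by simp
  qed
  then have d_on_circle: "\<And>b t. infinite_circle b t \<subseteq> M \<Longrightarrow> d b \<in> infinite_circle b t" by blast
  define S where "S = break_circles d M"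
  have "S \<subseteq> M" unfolding S_def break_circles_def by blast
  then have "S \<in> fan_indep m"
    using M(3) X finite_circle_free_subset[OF M(1)] infinite_circle_free_break_circles[OF d_on_circle]
    unfolding fan_indep_def S_def by blast
  moreover have "A \<subseteq> S" using M(2) d unfolding S_def break_circles_def by blast
  moreover have no_extension: "insert x S \<notin> fan_indep m" if x: "x \<in> X - S" for x
  proof (cases "x \<in> M")
    case True
    then have x_removed: "x \<in> M - break_circles d M" using x unfolding S_def by blast
    have "\<not> infinite_circle_free (insert x S)"
      using break_circles_insert_removed[OF d_on_circle x_removed] unfolding S_def .
    then show ?thesis unfolding fan_indep_def by blast
  next
    case False
    then obtain b i j where W: "finite_circle b i j \<subseteq> insert x M" and "i < j"
      using M_max x unfolding finite_circle_free_def by blast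
    have "\<not> finite_circle_free (insert x S) \<or> \<not> infinite_circle_free (insert x S)"
      using break_circles_insert_finite_circle[OF d_on_circle W \<open>i < j\<close>] unfolding S_def .
    then show ?thesis unfolding fan_indep_def by blast
  qed
  ultimately have "maximal_in {T \<in> fan_indep m. A \<subseteq> T \<and> T \<subseteq> X} S"
  proof (intro maximal_inI_insert[where E = X and K = "fan_indep m"])
    show "S \<in> {T \<in> fan_indep m. A \<subseteq> T \<and> T \<subseteq> X}"
      using \<open>S \<in> fan_indep m\<close> \<open>A \<subseteq> S\<close> \<open>S \<subseteq> M\<close> M(3) by blast
    show "U \<in> fan_indep m" if "T \<in> {T \<in> fan_indep m. A \<subseteq> T \<and> T \<subseteq> X}" "U \<subseteq> T" for T U
      using that fan_indep_subset by blast
  qed (use no_extension in blast)+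
  then show ?thesis by blast
qed

lemma matroid_fan: "matroid (fan_edges m) (fan_indep m)"
  unfolding matroid_def
proof (intro conjI allI impI ballI)
  show "{} \<in> fan_indep m"
    by (simp add: fan_indep_def finite_circle_free_def infinite_circle_free_def finite_circle_def
        infinite_circle_def)
  show "S \<subseteq> fan_edges m" if "S \<in> fan_indep m" for S
    using that by (simp add: fan_indep_def)
  show "B \<in> fan_indep m" if "A \<in> fan_indep m" "B \<subseteq> A" for A B
    using that by (rule fan_indep_subset)
  show "\<exists>b\<in>B - A. insert b A \<in> fan_indep m"
    if "maximal_in (fan_indep m) B" "A \<in> fan_indep m" "\<not> maximal_in (fan_indep m) A" for A B
    using that by (rule fan_indep_augment)
  show "\<exists>S. maximal_in {S \<in> fan_indep m. A \<subseteq> S \<and> S \<subseteq> X} S"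
    if "A \<in> fan_indep m" "A \<subseteq> X" "X \<subseteq> fan_edges m" for A X
    using that by (rule fan_indep_maximal_exists)
qed

lemma fin_indep_fan_iff:
  "S \<in> fin_indep (fan_edges m) (fan_indep m) \<longleftrightarrow> S \<subseteq> fan_edges m \<and> finite_circle_free S"
proof
  assume S: "S \<in> fin_indep (fan_edges m) (fan_indep m)"
  have "\<not> finite_circle b i j \<subseteq> S" if "i < j" for b i j
  proof
    assume "finite_circle b i j \<subseteq> S"
    then have "finite_circle b i j \<in> fan_indep m"
      using S finite_finite_circle unfolding fin_indep_def by blast
    then show False using that unfolding fan_indep_def finite_circle_free_def by blast
  qed
  then show "S \<subseteq> fan_edges m \<and> finite_circle_free S"
    using S unfolding fin_indep_def finite_circle_free_def by blast
next
  assume S: "S \<subseteq> fan_edges m \<and> finite_circle_free S"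
  have "infinite_circle_free T" if "finite T" for T
    using that infinite_infinite_circle finite_subset unfolding infinite_circle_free_def by blast
  then show "S \<in> fin_indep (fan_edges m) (fan_indep m)"
    using S finite_circle_free_subset unfolding fin_indep_def fan_indep_def by blast
qed

lemma infinite_circle_through_base_complement:
  assumes F: "finite_circle_free F" "F \<subseteq> fan_edges m"
    and B: "maximal_in (fan_indep m) B" "B \<subseteq> F" and e: "e \<in> F - B" "e \<in> block b"
  obtains t where "infinite_circle b t \<subseteq> insert e B" "e \<in> infinite_circle b t"
proof -
  have "insert e B \<notin> fan_indep m" using maximal_in_insert_notin[OF B(1)] e(1) by blast
  moreover have "insert e B \<subseteq> F" using B(2) e(1) by blast
  ultimately have "\<not> infinite_circle_free (insert e B)"
    using F finite_circle_free_subset[OF F(1)] unfolding fan_indep_def by blast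
  then obtain b' t where C: "infinite_circle b' t \<subseteq> insert e B"
    unfolding infinite_circle_free_def by blast
  have "infinite_circle_free B" using B(1) by (simp add: maximal_in_def fan_indep_def)
  then have "e \<in> infinite_circle b' t" using C unfolding infinite_circle_free_def by blast
  moreover have "b' = b"
    using calculation e(2) infinite_circle_subset_block block_disjoint by blast
  ultimately show ?thesis using that C by blast
qed

lemma base_complement_in_block_subsingleton:
  assumes F: "finite_circle_free F" "F \<subseteq> fan_edges m"
    and B: "maximal_in (fan_indep m) B" "B \<subseteq> F"
  shows "\<exists>e. (F - B) \<inter> block b \<subseteq> {e}"
proof -
  have "e1 = e2" if e: "e1 \<in> (F - B) \<inter> block b" "e2 \<in> (F - B) \<inter> block b" for e1 e2
  proof -
    obtain t1 where t1: "infinite_circle b t1 \<subseteq> insert e1 B"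
      using infinite_circle_through_base_complement[OF F B] e(1) by blast
    obtain t2 where t2: "infinite_circle b t2 \<subseteq> insert e2 B" "e2 \<in> infinite_circle b t2"
      using infinite_circle_through_base_complement[OF F B] e(2) by blast
    have "infinite_circle b t1 \<subseteq> F" "infinite_circle b t2 \<subseteq> F" using t1 t2(1) e B(2) by blast+
    then have "t1 = t2" by (rule infinite_circle_unique[OF F(1)])
    then have "e2 \<in> insert e1 B" using t1 t2(2) by blast
    then show "e1 = e2" using e(2) by blast
  qed
  then show ?thesis by (cases "(F - B) \<inter> block b = {}") blast+
qed

lemma base_complement_card_le:
  assumes F: "finite_circle_free F" "F \<subseteq> fan_edges m"
    and B: "maximal_in (fan_indep m) B" "B \<subseteq> F"
  shows "finite (F - B)" "card (F - B) \<le> m"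
proof -
  have parts: "finite ((F - B) \<inter> block b) \<and> card ((F - B) \<inter> block b) \<le> 1" for b
  proof -
    obtain e where e: "(F - B) \<inter> block b \<subseteq> {e}"
      using base_complement_in_block_subsingleton[OF F B] by blast
    then have "card ((F - B) \<inter> block b) \<le> card {e}" by (intro card_mono) auto
    then show ?thesis using e finite_subset by auto
  qed
  have blocks: "F - B = (\<Union>b<m. (F - B) \<inter> block b)" using F(2) unfolding fan_edges_def by blast
  show "finite (F - B)" by (subst blocks, rule finite_UN_I) (simp_all add: parts)
  have "card (F - B) \<le> (\<Sum>b<m. card ((F - B) \<inter> block b))"
    by (subst blocks) (rule card_UN_le, simp)
  also have "\<dots> \<le> m" using sum_mono[of "{..<m}" "\<lambda>b. card ((F - B) \<inter> block b)" "\<lambda>_. 1"] parts by simp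
  finally show "card (F - B) \<le> m" .
qed

definition split_base :: "nat \<Rightarrow> nat \<Rightarrow> nat set set" where
  "split_base m j = (\<Union>b<j. range (rim b)) \<union> (\<Union>b\<in>{j..<m}. range (spoke b))"

definition split_fin_base :: "nat \<Rightarrow> nat \<Rightarrow> nat set set" where
  "split_fin_base m j = split_base m j \<union> (\<lambda>b. spoke b 0) ` {..<j}"

lemma rim_in_split_base_iff [simp]: "rim b k \<in> split_base m j \<longleftrightarrow> b < j"
  by (auto simp: split_base_def)

lemma spoke_in_split_base_iff [simp]: "spoke b k \<in> split_base m j \<longleftrightarrow> j \<le> b \<and> b < m"
  by (auto simp: split_base_def)

lemma rim_in_split_fin_base_iff [simp]: "rim b k \<in> split_fin_base m j \<longleftrightarrow> b < j"
  by (auto simp: split_fin_base_def)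

lemma spoke_in_split_fin_base_iff [simp]:
  "spoke b k \<in> split_fin_base m j \<longleftrightarrow> b < j \<and> k = 0 \<or> j \<le> b \<and> b < m"
  by (auto simp: split_fin_base_def)

lemma split_base_subset_fan_edges: "j \<le> m \<Longrightarrow> split_base m j \<subseteq> fan_edges m"
  by (auto simp: split_base_def)

lemma split_fin_base_subset_fan_edges: "j \<le> m \<Longrightarrow> split_fin_base m j \<subseteq> fan_edges m"
  by (auto simp: split_fin_base_def split_base_def)

lemma split_fin_base_diff: "split_fin_base m j - split_base m j = (\<lambda>b. spoke b 0) ` {..<j}"
  by (auto simp: split_fin_base_def)

lemma ecard_split_fin_base_diff: "ecard (split_fin_base m j - split_base m j) = enat j"
proof -
  have "inj_on (\<lambda>b. spoke b 0) {..<j}" by (simp add: inj_on_def)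
  then show ?thesis by (simp add: split_fin_base_diff ecard_def card_image)
qed

lemma base_split_base:
  assumes "j \<le> m"
  shows "base (fan_indep m) (split_base m j)"
  unfolding base_def
proof (rule maximal_inI_insert[where E = "fan_edges m" and K = "fan_indep m"])
  show "split_base m j \<in> fan_indep m"
    unfolding fan_indep_iff_gaps using split_base_subset_fan_edges[OF assms] by auto
  fix x assume x: "x \<in> fan_edges m - split_base m j"
  then show "insert x (split_base m j) \<notin> fan_indep m"
  proof (cases rule: fan_edges_cases[OF DiffD1[OF x]])
    case (1 b k)
    then have "finite_circle b k (Suc k) \<subseteq> insert x (split_base m j)"
      using x by (auto simp: finite_circle_def)
    then show ?thesis unfolding fan_indep_def finite_circle_free_def by blast
  next
    case (2 b k)
    then have "infinite_circle b k \<subseteq> insert x (split_base m j)"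
      using x by (auto simp: infinite_circle_def)
    then show ?thesis unfolding fan_indep_def infinite_circle_free_def by blast
  qed
next
  show "T \<subseteq> fan_edges m" if "T \<in> fan_indep m" for T
    using that by (simp add: fan_indep_def)
  show "U \<in> fan_indep m" if "T \<in> fan_indep m" "U \<subseteq> T" for T U
    using that by (rule fan_indep_subset)
qed

lemma fin_base_split_fin_base:
  assumes "j \<le> m"
  shows "base (fin_indep (fan_edges m) (fan_indep m)) (split_fin_base m j)"
  unfolding base_def
proof (rule maximal_inI_insert[where E = "fan_edges m" and K = "fin_indep (fan_edges m) (fan_indep m)"])
  show "split_fin_base m j \<in> fin_indep (fan_edges m) (fan_indep m)"
    unfolding fin_indep_fan_iff finite_circle_free_iff
    using split_fin_base_subset_fan_edges[OF assms] by (auto intro: exI[of _ 0])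
  fix x assume x: "x \<in> fan_edges m - split_fin_base m j"
  then show "insert x (split_fin_base m j) \<notin> fin_indep (fan_edges m) (fan_indep m)"
  proof (cases rule: fan_edges_cases[OF DiffD1[OF x]])
    case (1 b k)
    then have "finite_circle b k (Suc k) \<subseteq> insert x (split_fin_base m j)"
      using x by (auto simp: finite_circle_def)
    then show ?thesis unfolding fin_indep_fan_iff finite_circle_free_def by blast
  next
    case (2 b k)
    then have "0 < k" "finite_circle b 0 k \<subseteq> insert x (split_fin_base m j)"
      using x by (auto simp: finite_circle_def)
    then show ?thesis unfolding fin_indep_fan_iff finite_circle_free_def by blast
  qed
next
  show "T \<subseteq> fan_edges m" if "T \<in> fin_indep (fan_edges m) (fan_indep m)" for T
    using that by (simp add: fin_indep_fan_iff)
  show "U \<in> fin_indep (fan_edges m) (fan_indep m)"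
    if "T \<in> fin_indep (fan_edges m) (fan_indep m)" "U \<subseteq> T" for T U
    using that finite_circle_free_subset by (auto simp: fin_indep_fan_iff)
qed

lemma fin_spectrum_fan: "fin_spectrum (fan_edges m) (fan_indep m) = enat ` {..m}"
proof
  show "fin_spectrum (fan_edges m) (fan_indep m) \<subseteq> enat ` {..m}"
  proof
    fix s assume "s \<in> fin_spectrum (fan_edges m) (fan_indep m)"
    then obtain F B where s: "s = ecard (F - B)" and F: "base (fin_indep (fan_edges m) (fan_indep m)) F"
      and B: "base (fan_indep m) B" "B \<subseteq> F"
      unfolding fin_spectrum_def by blast
    have "finite_circle_free F" "F \<subseteq> fan_edges m"
      using F by (simp_all add: base_def maximal_in_def fin_indep_fan_iff)
    from base_complement_card_le[OF this B[unfolded base_def]]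
    show "s \<in> enat ` {..m}" using s by (simp add: ecard_def)
  qed
  show "enat ` {..m} \<subseteq> fin_spectrum (fan_edges m) (fan_indep m)"
  proof
    fix s assume "s \<in> enat ` {..m}"
    then obtain j where j: "j \<le> m" "s = enat j" by blast
    have "split_base m j \<subseteq> split_fin_base m j" by (auto simp: split_fin_base_def)
    then show "s \<in> fin_spectrum (fan_edges m) (fan_indep m)"
      unfolding fin_spectrum_def
      using fin_base_split_fin_base[OF j(1)] base_split_base[OF j(1)] ecard_split_fin_base_diff[of m j] j(2)
      by (intro CollectI exI[of _ "split_fin_base m j"] exI[of _ "split_base m j"]) simp
  qed
qed

lemma nearly_finitary_fan: "nearly_finitary (fan_edges m) (fan_indep m)"
  unfolding nearly_finitary_def base_def
  using base_complement_card_le(1) by (auto simp: maximal_in_def fin_indep_fan_iff)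

theorem theorem3p2p1:
  fixes n :: nat
  assumes "n \<ge> 1"
  shows "\<exists>(E :: nat set set) L. matroid E L \<and> nearly_finitary E L \<and>
           finite (fin_spectrum E L) \<and> card (fin_spectrum E L) \<ge> n"
proof (intro exI conjI)
  show "matroid (fan_edges n) (fan_indep n)" by (rule matroid_fan)
  show "nearly_finitary (fan_edges n) (fan_indep n)" by (rule nearly_finitary_fan)
  show "finite (fin_spectrum (fan_edges n) (fan_indep n))" by (simp add: fin_spectrum_fan)
  have "card (enat ` {..n}) = Suc n" by (simp add: card_image inj_on_def)
  then show "n \<le> card (fin_spectrum (fan_edges n) (fan_indep n))" by (simp add: fin_spectrum_fan)
qed

end
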